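(* Let $N \ge 1$ and let $f_N(t) = \sum_{n=1}^N c_n e^{\alpha_n t}$ with real coefficients $c_n$ and real rate constants $\alpha_n$ that are pairwise distinct and all nonzero, and assume $f_N(t) \ge 0$ for all $t \ge 0$. Let $t_1,\dots,t_{2N}$ be distinct nonnegative reals. For $k \ge 0$ let $$I_{(k)}(t) := \int_0^{t}\int_0^{t^{(1)}}\cdots\int_0^{t^{(k)}} f_N(t^{(k+1)})\, dt^{(k+1)} \cdots dt^{(1)}$$ denote the $(k+1)$-fold iterated integral of $f_N$ from $0$ (so $I_{(0)}(t)=\int_0^t f_N(s)\,ds$). Then the data $\{f_N(t_i) : i = 1,\dots,2N\}$ together with $\{I_{(k)}(t_i) : k = 0,1,\dots,N,\ i = 1,\dots,2N\}$ uniquely determine the coefficients $c_n$ and the rate constants $\alpha_n$, $n = 1,\dots,N$. *)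

theory Defs
  imports "HOL-Analysis.Analysis"
begin

definition expsum :: "nat \<Rightarrow> (nat \<Rightarrow> real) \<Rightarrow> (nat \<Rightarrow> real) \<Rightarrow> real \<Rightarrow> real" where
  "expsum N c \<alpha> t = (\<Sum>n=1..N. c n * exp (\<alpha> n * t))"

fun iter_int :: "(real \<Rightarrow> real) \<Rightarrow> nat \<Rightarrow> real \<Rightarrow> real" where
  "iter_int f 0 t = integral {0..t} f"
| "iter_int f (Suc k) t = integral {0..t} (iter_int f k)"

end

theory Submission
  imports Defs
begin

text \<open>The difference of two exponential sums with N terms each is an exponential sum with at most
  2N distinct exponents. An exponential sum with at least as many real zeros as exponents vanishes
  identically: dividing by the exponential of one exponent and differentiating removes that term,
  and by Rolle's theorem the derivative loses at most one zero. So the two sums have the same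
  coefficient at every exponent, and for distinct exponents and nonzero coefficients this matches
  the terms one to one. Only the 2N point values enter the argument.\<close>

lemma Rolle_card_zeros:
  fixes h h' :: "real \<Rightarrow> real"
  assumes deriv: "\<And>x. (h has_real_derivative h' x) (at x)"
    and "finite Z" and zeros: "\<And>z. z \<in> Z \<Longrightarrow> h z = 0"
  shows "\<exists>Z'. finite Z' \<and> card Z \<le> card Z' + 1 \<and> (\<forall>z\<in>Z'. h' z = 0)"
proof -
  obtain zs where zs: "sorted_wrt (<) zs" "set zs = Z" "length zs = card Z"
    using finite_set_strict_sorted[OF \<open>finite Z\<close>] by blast
  define m where "m = card Z - 1"
  have "\<exists>w. zs ! i < w \<and> w < zs ! Suc i \<and> h' w = 0" if "i < m" for i
  proof -
    have lt: "zs ! i < zs ! Suc i"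
      using sorted_wrt_nth_less[OF zs(1)] that zs(3) m_def by simp
    have "h (zs ! i) = h (zs ! Suc i)"
      using zeros zs(2,3) that m_def by (metis Suc_lessD less_diff_conv nth_mem Suc_eq_plus1)
    moreover have "continuous_on {zs ! i..zs ! Suc i} h"
      using deriv by (meson DERIV_isCont continuous_at_imp_continuous_on)
    moreover have "h differentiable (at x)" for x
      using deriv real_differentiable_def by blast
    ultimately obtain w where "zs ! i < w" "w < zs ! Suc i" "(h has_real_derivative 0) (at w)"
      using Rolle[OF lt] by blast
    then show ?thesis
      using DERIV_unique deriv by blast
  qed
  then obtain w where w: "\<And>i. i < m \<Longrightarrow> zs ! i < w i \<and> w i < zs ! Suc i \<and> h' (w i) = 0"
    by metis
  have "strict_mono_on {..<m} w"
  proof (rule strict_mono_onI)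
    fix i j assume "i \<in> {..<m}" "j \<in> {..<m}" "i < j"
    then have "zs ! Suc i \<le> zs ! j"
      using sorted_wrt_nth_less[OF zs(1)] zs(3) m_def
      by (cases "Suc i = j") (auto simp: less_imp_le)
    moreover have "w i < zs ! Suc i" "zs ! j < w j"
      using w \<open>i \<in> {..<m}\<close> \<open>j \<in> {..<m}\<close> by auto
    ultimately show "w i < w j"
      by linarith
  qed
  then have "card (w ` {..<m}) = m"
    by (simp add: card_image strict_mono_on_imp_inj_on)
  then show ?thesis
    using w m_def by (intro exI[of _ "w ` {..<m}"]) auto
qed

lemma exp_sum_eq_0_imp_coeffs_eq_0:
  fixes a b :: "'a \<Rightarrow> real" and Z :: "real set"
  assumes "finite J" "inj_on b J" "finite Z" "card J \<le> card Z"
    and "\<And>z. z \<in> Z \<Longrightarrow> (\<Sum>j\<in>J. a j * exp (b j * z)) = 0"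
  shows "\<forall>j\<in>J. a j = 0"
  using assms
proof (induction J arbitrary: a b Z rule: finite_induct)
  case empty
  then show ?case by simp
next
  case (insert j0 J)
  define k where "k t = a j0 + (\<Sum>j\<in>J. a j * exp ((b j - b j0) * t))" for t
  define k' where "k' t = (\<Sum>j\<in>J. a j * (b j - b j0) * exp ((b j - b j0) * t))" for t
  have deriv: "(k has_real_derivative k' t) (at t)" for t
    unfolding k_def k'_def by (auto intro!: derivative_eq_intros simp: algebra_simps)
  have "k z = 0" if "z \<in> Z" for z
  proof -
    have "k z = exp (- (b j0 * z)) * (\<Sum>j\<in>insert j0 J. a j * exp (b j * z))"
      unfolding k_def using insert.hyps
      by (simp add: sum_distrib_left algebra_simps exp_add[symmetric] exp_diff[symmetric])
    then show ?thesis
      using insert.prems(4) that by simp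
  qed
  then obtain Z' where Z': "finite Z'" "card Z \<le> card Z' + 1" "\<forall>z\<in>Z'. k' z = 0"
    using Rolle_card_zeros[OF deriv \<open>finite Z\<close>] by blast
  have "inj_on (\<lambda>j. b j - b j0) J"
    using insert.prems(1) by (auto simp: inj_on_def)
  moreover have "card J \<le> card Z'"
    using insert.hyps insert.prems(3) Z'(2) by simp
  ultimately have "\<forall>j\<in>J. a j * (b j - b j0) = 0"
    using insert.IH[of "\<lambda>j. b j - b j0" Z' "\<lambda>j. a j * (b j - b j0)"] Z'(1,3)
    unfolding k'_def by (simp add: mult.assoc)
  moreover have "\<forall>j\<in>J. b j \<noteq> b j0"
    using insert.prems(1) insert.hyps(2) by (auto simp: inj_on_def)
  ultimately have J_zero: "\<forall>j\<in>J. a j = 0"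
    by simp
  obtain z where "z \<in> Z"
    using insert.hyps insert.prems(2,3) by fastforce
  then have "a j0 * exp (b j0 * z) = 0"
    using insert.prems(4)[of z] insert.hyps J_zero by simp
  with J_zero show ?case
    by simp
qed

definition exp_coeff :: "nat \<Rightarrow> (nat \<Rightarrow> real) \<Rightarrow> (nat \<Rightarrow> real) \<Rightarrow> real \<Rightarrow> real" where
  "exp_coeff N c \<alpha> \<beta> = (\<Sum>n | n \<in> {1..N} \<and> \<alpha> n = \<beta>. c n)"

lemma expsum_eq_sum_exp_coeff:
  assumes "finite B" "\<alpha> ` {1..N} \<subseteq> B"
  shows "expsum N c \<alpha> t = (\<Sum>\<beta>\<in>B. exp_coeff N c \<alpha> \<beta> * exp (\<beta> * t))"
proof -
  have "expsum N c \<alpha> t = (\<Sum>\<beta>\<in>B. \<Sum>n | n \<in> {1..N} \<and> \<alpha> n = \<beta>. c n * exp (\<alpha> n * t))"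
    unfolding expsum_def by (rule sum.group[OF _ assms, symmetric]) simp
  also have "\<dots> = (\<Sum>\<beta>\<in>B. exp_coeff N c \<alpha> \<beta> * exp (\<beta> * t))"
    unfolding exp_coeff_def by (intro sum.cong refl) (auto simp: sum_distrib_right)
  finally show ?thesis .
qed

lemma exp_coeff_eq_0_if_not_exponent:
  assumes "\<beta> \<notin> \<alpha> ` {1..N}"
  shows "exp_coeff N c \<alpha> \<beta> = 0"
proof -
  have "{n. n \<in> {1..N} \<and> \<alpha> n = \<beta>} = {}"
    using assms by auto
  then show ?thesis
    unfolding exp_coeff_def by (simp only: sum.empty)
qed

lemma exp_coeff_exponent:
  assumes "inj_on \<alpha> {1..N}" "n \<in> {1..N}"
  shows "exp_coeff N c \<alpha> (\<alpha> n) = c n"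
proof -
  have "{m. m \<in> {1..N} \<and> \<alpha> m = \<alpha> n} = {n}"
    using assms by (auto dest: inj_onD)
  then show ?thesis
    unfolding exp_coeff_def by simp
qed

lemma exp_coeff_eq_if_expsum_eq_on:
  assumes "finite T" "2 * N \<le> card T"
    and "\<And>t. t \<in> T \<Longrightarrow> expsum N c \<alpha> t = expsum N c' \<alpha>' t"
  shows "exp_coeff N c \<alpha> \<beta> = exp_coeff N c' \<alpha>' \<beta>"
proof -
  define B where "B = \<alpha> ` {1..N} \<union> \<alpha>' ` {1..N}"
  have "finite B"
    unfolding B_def by simp
  have "card B \<le> card (\<alpha> ` {1..N}) + card (\<alpha>' ` {1..N})"
    unfolding B_def by (rule card_Un_le)
  also have "\<dots> \<le> 2 * N"
    using card_image_le[of "{1..N}" \<alpha>] card_image_le[of "{1..N}" \<alpha>'] by simp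
  finally have "card B \<le> card T"
    using assms(2) by linarith
  moreover have "(\<Sum>\<beta>\<in>B. (exp_coeff N c \<alpha> \<beta> - exp_coeff N c' \<alpha>' \<beta>) * exp (\<beta> * t)) = 0"
    if "t \<in> T" for t
    using assms(3)[OF that] expsum_eq_sum_exp_coeff[OF \<open>finite B\<close>, of \<alpha> N c t]
      expsum_eq_sum_exp_coeff[OF \<open>finite B\<close>, of \<alpha>' N c' t]
    unfolding B_def by (simp add: left_diff_distrib sum_subtractf)
  ultimately have "\<forall>\<beta>\<in>B. exp_coeff N c \<alpha> \<beta> - exp_coeff N c' \<alpha>' \<beta> = 0"
    by (intro exp_sum_eq_0_imp_coeffs_eq_0[where b="\<lambda>\<beta>. \<beta>"]) (use \<open>finite B\<close> assms(1) in auto)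
  then show ?thesis
    using exp_coeff_eq_0_if_not_exponent unfolding B_def by (cases "\<beta> \<in> B") (auto simp: B_def)
qed

lemma permutation_if_exp_coeff_eq:
  assumes "inj_on \<alpha> {1..N}" "inj_on \<alpha>' {1..N}" "\<forall>n\<in>{1..N}. c' n \<noteq> 0"
    and coeff_eq: "\<And>\<beta>. exp_coeff N c \<alpha> \<beta> = exp_coeff N c' \<alpha>' \<beta>"
  shows "\<exists>\<sigma>. bij_betw \<sigma> {1..N} {1..N} \<and> (\<forall>n\<in>{1..N}. c' n = c (\<sigma> n) \<and> \<alpha>' n = \<alpha> (\<sigma> n))"
proof -
  have c'_eq: "c' n = exp_coeff N c \<alpha> (\<alpha>' n)" if "n \<in> {1..N}" for n
    using coeff_eq exp_coeff_exponent[OF assms(2) that] by simp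
  have exponent: "\<alpha>' n \<in> \<alpha> ` {1..N}" if "n \<in> {1..N}" for n
    using c'_eq[OF that] assms(3) that exp_coeff_eq_0_if_not_exponent by metis
  define \<sigma> where "\<sigma> n = inv_into {1..N} \<alpha> (\<alpha>' n)" for n
  have \<sigma>_in: "\<sigma> n \<in> {1..N}" if "n \<in> {1..N}" for n
    unfolding \<sigma>_def by (rule inv_into_into[OF exponent[OF that]])
  have \<alpha>_\<sigma>: "\<alpha> (\<sigma> n) = \<alpha>' n" if "n \<in> {1..N}" for n
    unfolding \<sigma>_def by (rule f_inv_into_f[OF exponent[OF that]])
  have c_\<sigma>: "c (\<sigma> n) = c' n" if "n \<in> {1..N}" for n
    using exp_coeff_exponent[OF assms(1) \<sigma>_in[OF that]] \<alpha>_\<sigma>[OF that] c'_eq[OF that] by simp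
  have "inj_on \<sigma> {1..N}"
    using assms(2) \<alpha>_\<sigma> by (metis inj_on_def)
  moreover have "\<sigma> ` {1..N} = {1..N}"
    using endo_inj_surj \<sigma>_in calculation by (metis finite_atLeastAtMost image_subsetI)
  ultimately show ?thesis
    using \<alpha>_\<sigma> c_\<sigma> unfolding bij_betw_def by metis
qed

theorem theorem2:
  fixes N :: nat and c \<alpha> c' \<alpha>' :: "nat \<Rightarrow> real" and tt :: "nat \<Rightarrow> real"
  assumes "N \<ge> 1"
    and "inj_on \<alpha> {1..N}" and "\<forall>n\<in>{1..N}. \<alpha> n \<noteq> 0" and "\<forall>n\<in>{1..N}. c n \<noteq> 0"
    and "\<forall>t\<ge>0. expsum N c \<alpha> t \<ge> 0"
    and "inj_on \<alpha>' {1..N}" and "\<forall>n\<in>{1..N}. \<alpha>' n \<noteq> 0" and "\<forall>n\<in>{1..N}. c' n \<noteq> 0"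
    and "\<forall>t\<ge>0. expsum N c' \<alpha>' t \<ge> 0"
    and "inj_on tt {1..2*N}" and "\<forall>i\<in>{1..2*N}. tt i \<ge> 0"
    and "\<forall>i\<in>{1..2*N}. expsum N c \<alpha> (tt i) = expsum N c' \<alpha>' (tt i)"
    and "\<forall>k\<le>N. \<forall>i\<in>{1..2*N}.
           iter_int (expsum N c \<alpha>) k (tt i) = iter_int (expsum N c' \<alpha>') k (tt i)"
  shows "\<exists>\<sigma>. bij_betw \<sigma> {1..N} {1..N} \<and> (\<forall>n\<in>{1..N}. c' n = c (\<sigma> n) \<and> \<alpha>' n = \<alpha> (\<sigma> n))"
proof -
  have "card (tt ` {1..2*N}) = 2 * N"
    using assms(10) by (simp add: card_image)
  then have "exp_coeff N c \<alpha> \<beta> = exp_coeff N c' \<alpha>' \<beta>" for \<beta>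
    using assms(12) by (intro exp_coeff_eq_if_expsum_eq_on[of "tt ` {1..2*N}"]) auto
  then show ?thesis
    using permutation_if_exp_coeff_eq assms(2,6,8) by blast
qed

end
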